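(* Let $p$ be a prime, $n\ge2$, and $\Gamma$ a profinite group acting trivially on $\mathbb{F}_p$. If every open subgroup of $\Gamma$ satisfies the $n$-fold vanishing Massey product property, then every closed subgroup of $\Gamma$ satisfies the $n$-fold vanishing Massey product property.
   Context: With $U_{n+1}(\mathbb{F}_p)$ the upper unitriangular $(n+1)\times(n+1)$ matrices over $\mathbb{F}_p$ and $\overline{U_{n+1}(\mathbb{F}_p)}$ its quotient by the central subgroup given by the $(1,n+1)$ entry, a profinite group $H$ satisfies the $n$-fold vanishing Massey product property if for every continuous homomorphism $\varphi:H\to\overline{U_{n+1}(\mathbb{F}_p)}$ there is a continuous homomorphism $\psi:H\to U_{n+1}(\mathbb{F}_p)$ whose $(i,i+1)$ entries agree with those of $\varphi$ at every $h\in H$, for $1\le i\le n$. *)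

theory Defs
  imports "HOL-Analysis.Analysis" "HOL-Algebra.Algebra"
begin

definition topological_group :: "'a monoid \<Rightarrow> 'a topology \<Rightarrow> bool" where
  "topological_group G T \<longleftrightarrow> group G \<and> topspace T = carrier G \<and>
     continuous_map (prod_topology T T) T (\<lambda>(x, y). x \<otimes>\<^bsub>G\<^esub> y) \<and>
     continuous_map T T (\<lambda>x. inv\<^bsub>G\<^esub> x)"

definition totally_disconnected_space :: "'a topology \<Rightarrow> bool" where
  "totally_disconnected_space T \<longleftrightarrow>
     (\<forall>S. connectedin T S \<longrightarrow> (\<exists>x. S \<subseteq> {x}))"

definition profinite_group :: "'a monoid \<Rightarrow> 'a topology \<Rightarrow> bool" where
  "profinite_group G T \<longleftrightarrow> topological_group G T \<and> compact_space T \<and>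
     Hausdorff_space T \<and> totally_disconnected_space T"

text \<open>Matrices are functions nat \<Rightarrow> nat \<Rightarrow> int, indices 1..n+1, entries in {0..p-1}
  representing F_p; entries outside the index range are 0.\<close>
definition unitri_carrier :: "nat \<Rightarrow> nat \<Rightarrow> (nat \<Rightarrow> nat \<Rightarrow> int) set" where
  "unitri_carrier p n = {M. (\<forall>i j. M i j \<in> {0..<int p}) \<and>
      (\<forall>i j. \<not> (i \<in> {1..n+1} \<and> j \<in> {1..n+1}) \<longrightarrow> M i j = 0) \<and>
      (\<forall>i\<in>{1..n+1}. M i i = 1) \<and>
      (\<forall>i j. j < i \<longrightarrow> M i j = 0)}"

definition unitri_group :: "nat \<Rightarrow> nat \<Rightarrow> (nat \<Rightarrow> nat \<Rightarrow> int) monoid" where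
  "unitri_group p n = \<lparr> carrier = unitri_carrier p n,
     mult = (\<lambda>A B i j. if i \<in> {1..n+1} \<and> j \<in> {1..n+1}
                        then (\<Sum>k=1..n+1. A i k * B k j) mod int p else 0),
     one = (\<lambda>i j. if i \<in> {1..n+1} \<and> i = j then 1 else 0) \<rparr>"

definition corner_subgroup :: "nat \<Rightarrow> nat \<Rightarrow> (nat \<Rightarrow> nat \<Rightarrow> int) set" where
  "corner_subgroup p n = {M \<in> unitri_carrier p n.
      \<forall>i j. i < j \<and> (i, j) \<noteq> (1, n+1) \<longrightarrow> M i j = 0}"

definition unitri_bar :: "nat \<Rightarrow> nat \<Rightarrow> (nat \<Rightarrow> nat \<Rightarrow> int) set monoid" where
  "unitri_bar p n = unitri_group p n Mod corner_subgroup p n"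

text \<open>Finite groups carry the discrete topology. The (i,i+1) entries of a coset are
  those of any of its members (well defined).\<close>
definition massey_vanishing :: "nat \<Rightarrow> nat \<Rightarrow> 'a monoid \<Rightarrow> 'a topology \<Rightarrow> bool" where
  "massey_vanishing p n H TH \<longleftrightarrow>
    (\<forall>\<phi>. \<phi> \<in> hom H (unitri_bar p n) \<and>
         continuous_map TH (discrete_topology (carrier (unitri_bar p n))) \<phi> \<longrightarrow>
      (\<exists>\<psi>. \<psi> \<in> hom H (unitri_group p n) \<and>
         continuous_map TH (discrete_topology (carrier (unitri_group p n))) \<psi> \<and>
         (\<forall>h\<in>carrier H. \<forall>M\<in>\<phi> h. \<forall>i\<in>{1..n}. M i (Suc i) = \<psi> h i (Suc i))))"

end

theory Submission
  imports Defs
begin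

(* A continuous homomorphism from a subgroup H of a profinite group into a discrete group has
   open kernel in H, so its kernel contains N \<inter> H for an open normal subgroup N: open subgroups
   form a basis at 1 (a compact open neighbourhood of 1 contains its stabiliser under right
   translation), and by compactness an open subgroup has finite index, so its normal core is a
   finite intersection of conjugates. Setting \<phi>(n h) = \<phi>(h) extends the homomorphism to the
   open subgroup N H; a lift there, restricted to H, is a lift of the original homomorphism. *)

lemma (in group) inv_mult_cancel_left [simp]:
  "x \<in> carrier G \<Longrightarrow> y \<in> carrier G \<Longrightarrow> inv x \<otimes> (x \<otimes> y) = y"
  by (simp add: m_assoc [symmetric])

lemma (in group) mult_inv_cancel_left [simp]:
  "x \<in> carrier G \<Longrightarrow> y \<in> carrier G \<Longrightarrow> x \<otimes> (inv x \<otimes> y) = y"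
  by (simp add: m_assoc [symmetric])

lemma set_mult_memI: "x \<in> H \<Longrightarrow> y \<in> K \<Longrightarrow> x \<otimes>\<^bsub>G\<^esub> y \<in> H <#>\<^bsub>G\<^esub> K"
  unfolding set_mult_def by (auto intro!: UN_I)

lemma set_mult_memE:
  assumes "z \<in> H <#>\<^bsub>G\<^esub> K"
  obtains x y where "x \<in> H" "y \<in> K" "z = x \<otimes>\<^bsub>G\<^esub> y"
  using assms unfolding set_mult_def by blast

lemma compact_Hausdorff_totally_disconnected_clopen_nhd:
  assumes "compact_space T" "Hausdorff_space T" "totally_disconnected_space T"
    and "openin T S" "x \<in> S"
  obtains W where "openin T W" "closedin T W" "x \<in> W" "W \<subseteq> S"
proof -
  have x: "x \<in> topspace T" using assms(4,5) openin_subset by blast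
  have "separated_between T {x} (topspace T - S)"
  proof (rule cut_wire_fence_theorem[OF assms(1,2)])
    show "closedin T {x}" using assms(2) x by (simp add: closedin_Hausdorff_singleton)
    show "closedin T (topspace T - S)" using assms(4) by blast
    fix C assume "connectedin T C"
    then obtain y where "C \<subseteq> {y}"
      using assms(3) unfolding totally_disconnected_space_def by blast
    then show "disjnt C {x} \<or> disjnt C (topspace T - S)"
      using assms(5) by (auto simp: disjnt_def)
  qed
  then obtain U V where "openin T U" "openin T V" "U \<union> V = topspace T" "disjnt U V"
    "x \<in> U" "topspace T - S \<subseteq> V"
    unfolding separated_between_def by blast
  moreover from calculation have "U = topspace T - V" by (auto simp: disjnt_def)
  ultimately show thesis
    by (intro that[of U]) (auto simp: disjnt_def)
qed

locale topgroup = group G for G :: "'a monoid" (structure) +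
  fixes T :: "'a topology"
  assumes topological_group: "topological_group G T"
begin

lemma topspace_eq [simp]: "topspace T = carrier G"
  using topological_group by (simp add: topological_group_def)

lemma continuous_map_mult:
  assumes "continuous_map T T f" "continuous_map T T g"
  shows "continuous_map T T (\<lambda>x. f x \<otimes> g x)"
proof -
  have "continuous_map (prod_topology T T) T (\<lambda>(x, y). x \<otimes> y)"
    using topological_group by (simp add: topological_group_def)
  from continuous_map_compose[OF continuous_map_pairedI[OF assms] this]
  show ?thesis by (simp add: o_def)
qed

lemma continuous_map_inv: "continuous_map T T (\<lambda>x. inv x)"
  using topological_group by (simp add: topological_group_def)

lemma openin_preimage_mult:
  assumes "openin T S" "a \<in> carrier G" "b \<in> carrier G"
  shows "openin T {y \<in> carrier G. a \<otimes> y \<otimes> b \<in> S}"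
proof -
  have "continuous_map T T (\<lambda>y. a \<otimes> y \<otimes> b)"
    using assms(2,3) by (intro continuous_map_mult) auto
  from openin_continuous_map_preimage[OF this assms(1)] show ?thesis by simp
qed

lemma openin_r_coset:
  assumes "openin T S" "a \<in> carrier G"
  shows "openin T (S #> a)"
proof -
  have "S \<subseteq> carrier G" using openin_subset[OF assms(1)] by simp
  with assms(2) have "S #> a = {y \<in> carrier G. \<one> \<otimes> y \<otimes> inv a \<in> S}"
    by (force simp: r_coset_def m_assoc)
  then show ?thesis using openin_preimage_mult[OF assms(1)] assms(2) by simp
qed

lemma openin_subgroupI:
  assumes "subgroup S G" "openin T B" "\<one> \<in> B" "B \<subseteq> S"
  shows "openin T S"
proof -
  have "S = (\<Union>g\<in>S. B #> g)"
  proof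
    show "S \<subseteq> (\<Union>g\<in>S. B #> g)"
      using assms(1,3) by (force simp: r_coset_def dest: subgroup.mem_carrier)
    show "(\<Union>g\<in>S. B #> g) \<subseteq> S"
      using assms(1,4) by (auto simp: r_coset_def intro: subgroup.m_closed)
  qed
  also have "openin T \<dots>"
    using assms(1,2) by (intro openin_Union) (auto intro: openin_r_coset dest: subgroup.mem_carrier)
  finally show ?thesis .
qed

lemma open_subgroup_inside_compact_open:
  assumes "compactin T W" "openin T W" "\<one> \<in> W"
  obtains V where "subgroup V G" "openin T V" "V \<subseteq> W"
proof -
  have W: "W \<subseteq> carrier G" using openin_subset[OF assms(2)] by simp
  have "continuous_map (prod_topology T T) T (\<lambda>(x, y). x \<otimes> y)"
    using topological_group by (simp add: topological_group_def)
  from openin_continuous_map_preimage[OF this assms(2)]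
  have mult_open: "openin (prod_topology T T) {z \<in> carrier G \<times> carrier G. fst z \<otimes> snd z \<in> W}"
    by (simp add: case_prod_beta)
  have subW: "W \<times> {\<one>} \<subseteq> {z \<in> carrier G \<times> carrier G. fst z \<otimes> snd z \<in> W}"
    using W by auto
  obtain U B where B: "openin T B" "\<one> \<in> B" and U: "W \<subseteq> U"
    "U \<times> B \<subseteq> {z \<in> carrier G \<times> carrier G. fst z \<otimes> snd z \<in> W}"
    using tube_lemma_left[OF mult_open assms(1) _ subW] by auto
  have WB: "x \<otimes> b \<in> W" if "x \<in> W" "b \<in> B" for x b
  proof -
    have "(x, b) \<in> U \<times> B" using that U(1) by blast
    from subsetD[OF U(2) this] show ?thesis by simp
  qed
  have "B \<subseteq> carrier G" using openin_subset[OF B(1)] by simp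
  \<comment> \<open>the stabiliser of \<open>W\<close>; it is open because it contains the neighbourhood \<open>B \<inter> B\<inverse>\<close> of \<open>\<one>\<close>\<close>
  define S where "S = {g \<in> carrier G. \<forall>x\<in>W. x \<otimes> g \<in> W \<and> x \<otimes> inv g \<in> W}"
  have S: "subgroup S G"
  proof (rule subgroupI)
    have "\<one> \<in> S" using W by (auto simp: S_def subset_iff)
    then show "S \<noteq> {}" by blast
    fix g h assume g: "g \<in> S" and h: "h \<in> S"
    then show "inv g \<in> S" by (auto simp: S_def)
    have "x \<otimes> (g \<otimes> h) \<in> W \<and> x \<otimes> inv (g \<otimes> h) \<in> W" if "x \<in> W" for x
    proof -
      have "x \<otimes> g \<otimes> h \<in> W \<and> x \<otimes> inv h \<otimes> inv g \<in> W"
        using that g h by (simp add: S_def)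
      moreover have "x \<in> carrier G" "g \<in> carrier G" "h \<in> carrier G"
        using that g h W by (auto simp: S_def)
      ultimately show ?thesis by (simp add: m_assoc inv_mult_group)
    qed
    with g h show "g \<otimes> h \<in> S" by (simp add: S_def)
  qed (auto simp: S_def)
  have "openin T {y \<in> carrier G. inv y \<in> B}"
    using openin_continuous_map_preimage[OF continuous_map_inv B(1)] by simp
  then have "openin T (B \<inter> {y \<in> carrier G. inv y \<in> B})" using B(1) by blast
  moreover have "B \<inter> {y \<in> carrier G. inv y \<in> B} \<subseteq> S"
    using WB \<open>B \<subseteq> carrier G\<close> by (auto simp: S_def)
  ultimately have "openin T S"
    using B(2) by (intro openin_subgroupI[OF S]) auto
  moreover have "S \<subseteq> W"
  proof
    fix g assume "g \<in> S"
    then have "g \<in> carrier G" "\<one> \<otimes> g \<in> W" using assms(3) by (auto simp: S_def)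
    then show "g \<in> W" by simp
  qed
  ultimately show thesis using S that by blast
qed

lemma finite_r_coset_cover:
  assumes "compact_space T" "subgroup V G" "openin T V"
  obtains F where "finite F" "F \<subseteq> carrier G" "carrier G \<subseteq> (\<Union>a\<in>F. V #> a)"
proof -
  have "carrier G \<subseteq> (\<Union>a\<in>carrier G. V #> a)"
    using assms(2) by (force simp: r_coset_def dest: subgroup.one_closed)
  moreover have "compactin T (carrier G)"
    using assms(1) by (simp add: compact_space_def)
  ultimately obtain \<F> where "finite \<F>" "\<F> \<subseteq> (\<lambda>a. V #> a) ` carrier G" "carrier G \<subseteq> \<Union>\<F>"
    using compactinD[of T "carrier G" "(\<lambda>a. V #> a) ` carrier G"] assms(3)
    by (auto intro: openin_r_coset)
  then show thesis
    by (metis finite_subset_image that)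
qed

lemma open_normal_subgroup_inside_open_subgroup:
  assumes "compact_space T" "subgroup V G" "openin T V"
  obtains N where "N \<lhd> G" "openin T N" "N \<subseteq> V"
proof -
  interpret V: subgroup V G by (rule assms(2))
  obtain F where F: "finite F" "F \<subseteq> carrier G" "carrier G \<subseteq> (\<Union>a\<in>F. V #> a)"
    using finite_r_coset_cover[OF assms] .
  have "F \<noteq> {}" using F(3) by auto
  define N where "N = {y \<in> carrier G. \<forall>g\<in>carrier G. g \<otimes> y \<otimes> inv g \<in> V}"
  have "N \<lhd> G"
    unfolding normal_inv_iff
  proof (intro conjI ballI)
    show "subgroup N G"
    proof (rule subgroupI)
      fix y z assume y: "y \<in> N" and z: "z \<in> N"
      have "inv (g \<otimes> y \<otimes> inv g) \<in> V" if "g \<in> carrier G" for g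
        using y that by (simp add: N_def)
      with y show "inv y \<in> N"
        by (simp add: N_def inv_mult_group m_assoc)
      have "(g \<otimes> y \<otimes> inv g) \<otimes> (g \<otimes> z \<otimes> inv g) \<in> V" if "g \<in> carrier G" for g
        using y z that by (simp add: N_def)
      with y z show "y \<otimes> z \<in> N"
        by (simp add: N_def m_assoc)
    qed (auto simp: N_def)
    fix g n assume g: "g \<in> carrier G" and n: "n \<in> N"
    have "(h \<otimes> g) \<otimes> n \<otimes> inv (h \<otimes> g) \<in> V" if "h \<in> carrier G" for h
      using g n that by (simp add: N_def)
    with g n show "g \<otimes> n \<otimes> inv g \<in> N"
      by (simp add: N_def m_assoc inv_mult_group)
  qed
  moreover have "N \<subseteq> V"
  proof
    fix y assume "y \<in> N"
    then have "y \<in> carrier G" "\<forall>g\<in>carrier G. g \<otimes> y \<otimes> inv g \<in> V"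
      by (simp_all add: N_def)
    then show "y \<in> V" using one_closed by (metis inv_one l_one r_one)
  qed
  \<comment> \<open>a conjugate of \<open>V\<close> only depends on the coset \<open>V #> a\<close>, so finitely many suffice\<close>
  moreover have "N = (\<Inter>a\<in>F. {y \<in> carrier G. a \<otimes> y \<otimes> inv a \<in> V})"
  proof
    show "N \<subseteq> (\<Inter>a\<in>F. {y \<in> carrier G. a \<otimes> y \<otimes> inv a \<in> V})"
      using F(2) by (auto simp: N_def)
    show "(\<Inter>a\<in>F. {y \<in> carrier G. a \<otimes> y \<otimes> inv a \<in> V}) \<subseteq> N"
    proof
      fix y assume y: "y \<in> (\<Inter>a\<in>F. {y \<in> carrier G. a \<otimes> y \<otimes> inv a \<in> V})"
      have "y \<in> carrier G" using y \<open>F \<noteq> {}\<close> by auto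
      have "g \<otimes> y \<otimes> inv g \<in> V" if g: "g \<in> carrier G" for g
      proof -
        obtain a v where "a \<in> F" "v \<in> V" "g = v \<otimes> a"
          using F(3) g by (auto simp: r_coset_def)
        moreover from this have "g \<otimes> y \<otimes> inv g = v \<otimes> (a \<otimes> y \<otimes> inv a) \<otimes> inv v"
          using F(2) \<open>y \<in> carrier G\<close> by (auto simp: m_assoc inv_mult_group)
        ultimately show ?thesis using y by auto
      qed
      with \<open>y \<in> carrier G\<close> show "y \<in> N" by (simp add: N_def)
    qed
  qed
  then have "openin T N"
    using F(1,2) \<open>F \<noteq> {}\<close> assms(3) by (auto intro!: openin_Inter openin_preimage_mult)
  ultimately show thesis using that by blast
qed

lemma continuous_map_discrete_if_r_coset_invariant:
  assumes "subgroup N G" "openin T N" "subgroup U G" "N \<subseteq> U" "f \<in> U \<rightarrow> S"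
    and invariant: "\<And>n x. n \<in> N \<Longrightarrow> x \<in> U \<Longrightarrow> f (n \<otimes> x) = f x"
  shows "continuous_map (subtopology T U) (discrete_topology S) f"
  unfolding continuous_map_def
proof (intro conjI allI impI)
  have U: "U \<subseteq> carrier G" using assms(3) by (rule subgroup.subset)
  then show "f \<in> topspace (subtopology T U) \<rightarrow> topspace (discrete_topology S)"
    using assms(5) by auto
  fix S' :: "'b set"
  let ?P = "{x \<in> U. f x \<in> S'}"
  have "?P = (\<Union>x\<in>?P. N #> x)"
  proof
    show "?P \<subseteq> (\<Union>x\<in>?P. N #> x)"
      using U assms(1) by (force simp: r_coset_def dest: subgroup.one_closed)
    show "(\<Union>x\<in>?P. N #> x) \<subseteq> ?P"
      using assms(3,4) invariant by (auto simp: r_coset_def intro: subgroup.m_closed)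
  qed
  also have "openin T \<dots>"
    using assms(2) U by (intro openin_Union) (auto intro: openin_r_coset)
  finally have "openin (subtopology T U) ?P"
    by (auto simp: openin_subtopology)
  moreover have "{x \<in> topspace (subtopology T U). f x \<in> S'} = ?P" using U by auto
  ultimately show "openin (subtopology T U) {x \<in> topspace (subtopology T U). f x \<in> S'}"
    by simp
qed

end

lemma (in group) hom_extend_to_normal_product:
  assumes "N \<lhd> G" "subgroup H G" and hom: "\<phi> \<in> hom (G\<lparr>carrier := H\<rparr>) B"
    and trivial_on_N: "\<And>h. h \<in> N \<inter> H \<Longrightarrow> \<phi> h = \<phi> \<one>"
  obtains \<phi>' where "\<phi>' \<in> hom (G\<lparr>carrier := N <#> H\<rparr>) B"
    "\<And>n h. n \<in> N \<Longrightarrow> h \<in> H \<Longrightarrow> \<phi>' (n \<otimes> h) = \<phi> h"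
proof -
  interpret N: normal N G by (rule assms(1))
  interpret H: subgroup H G by (rule assms(2))
  have \<phi>_mult: "\<phi> (x \<otimes> y) = \<phi> x \<otimes>\<^bsub>B\<^esub> \<phi> y" if "x \<in> H" "y \<in> H" for x y
    using hom_mult[OF hom, of x y] that by simp
  have \<phi>_closed: "\<phi> h \<in> carrier B" if "h \<in> H" for h
    using hom_in_carrier[OF hom, of h] that by simp
  have well_defined: "\<phi> h' = \<phi> h"
    if "n \<otimes> h = n' \<otimes> h'" "n \<in> N" "n' \<in> N" "h \<in> H" "h' \<in> H" for n h n' h'
  proof -
    have "inv n' \<otimes> (n \<otimes> h) \<otimes> inv h = inv n' \<otimes> (n' \<otimes> h') \<otimes> inv h"
      using that(1) by simp
    then have "h' \<otimes> inv h = inv n' \<otimes> n"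
      using that(2-5) by (simp add: m_assoc)
    then have "h' \<otimes> inv h \<in> N" using that(2,3) by simp
    moreover have "h' \<otimes> inv h \<in> H" using that(4,5) by simp
    ultimately have "h' \<otimes> inv h \<in> N \<inter> H" by blast
    have "\<phi> h' = \<phi> ((h' \<otimes> inv h) \<otimes> h)" using that(4,5) by (simp add: m_assoc)
    also have "\<dots> = \<phi> (h' \<otimes> inv h) \<otimes>\<^bsub>B\<^esub> \<phi> h" using \<phi>_mult that(4,5) by simp
    also have "\<dots> = \<phi> \<one> \<otimes>\<^bsub>B\<^esub> \<phi> h" using trivial_on_N[OF \<open>h' \<otimes> inv h \<in> N \<inter> H\<close>] by simp
    also have "\<dots> = \<phi> h" using \<phi>_mult[of \<one> h] that(4) by simp
    finally show ?thesis .
  qed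
  define \<phi>' where "\<phi>' x = \<phi> (SOME h. h \<in> H \<and> (\<exists>n\<in>N. x = n \<otimes> h))" for x
  have \<phi>'_eq: "\<phi>' (n \<otimes> h) = \<phi> h" if "n \<in> N" "h \<in> H" for n h
  proof -
    have "\<exists>h'. h' \<in> H \<and> (\<exists>n'\<in>N. n \<otimes> h = n' \<otimes> h')" using that by blast
    from someI_ex[OF this] show ?thesis
      unfolding \<phi>'_def using well_defined that by (metis (no_types, lifting))
  qed
  have "\<phi>' \<in> hom (G\<lparr>carrier := N <#> H\<rparr>) B"
  proof (rule homI)
    fix x y assume "x \<in> carrier (G\<lparr>carrier := N <#> H\<rparr>)" "y \<in> carrier (G\<lparr>carrier := N <#> H\<rparr>)"
    then obtain n1 h1 n2 h2 where x: "n1 \<in> N" "h1 \<in> H" "x = n1 \<otimes> h1"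
      and y: "n2 \<in> N" "h2 \<in> H" "y = n2 \<otimes> h2"
      by (auto elim!: set_mult_memE)
    then show "\<phi>' x \<in> carrier B" using \<phi>'_eq \<phi>_closed by simp
    \<comment> \<open>move \<open>h1\<close> past \<open>n2\<close> by conjugation, which preserves the normal subgroup \<open>N\<close>\<close>
    have "x \<otimes> y = (n1 \<otimes> (h1 \<otimes> n2 \<otimes> inv h1)) \<otimes> (h1 \<otimes> h2)"
      using x y by (simp add: m_assoc)
    moreover have "n1 \<otimes> (h1 \<otimes> n2 \<otimes> inv h1) \<in> N"
      using x y by (simp add: N.inv_op_closed2)
    ultimately show "\<phi>' (x \<otimes>\<^bsub>G\<lparr>carrier := N <#> H\<rparr>\<^esub> y) = \<phi>' x \<otimes>\<^bsub>B\<^esub> \<phi>' y"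
      using x y \<phi>'_eq \<phi>_mult by simp
  qed
  with \<phi>'_eq show thesis using that by blast
qed

lemma profinite_group_topgroup: "profinite_group G T \<Longrightarrow> topgroup G T"
  by (simp add: profinite_group_def topgroup_def topgroup_axioms_def topological_group_def)

lemma profinite_open_normal_subgroup_inside_nhd:
  fixes G (structure)
  assumes "profinite_group G T" "openin T A" "\<one> \<in> A"
  obtains N where "N \<lhd> G" "openin T N" "N \<subseteq> A"
proof -
  interpret topgroup G T using assms(1) by (rule profinite_group_topgroup)
  have T: "compact_space T" "Hausdorff_space T" "totally_disconnected_space T"
    using assms(1) by (simp_all add: profinite_group_def)
  obtain W where W: "openin T W" "closedin T W" "\<one> \<in> W" "W \<subseteq> A"
    using compact_Hausdorff_totally_disconnected_clopen_nhd[OF T assms(2,3)] .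
  obtain V where V: "subgroup V G" "openin T V" "V \<subseteq> W"
    using open_subgroup_inside_compact_open[OF closedin_compact_space[OF T(1) W(2)] W(1,3)] .
  obtain N where "N \<lhd> G" "openin T N" "N \<subseteq> V"
    using open_normal_subgroup_inside_open_subgroup[OF T(1) V(1,2)] .
  with V W show thesis using that by blast
qed

lemma profinite_open_normal_subgroup_inside_kernel:
  fixes G (structure)
  assumes "profinite_group G T" "subgroup H G"
    and hom: "\<phi> \<in> hom (G\<lparr>carrier := H\<rparr>) B"
    and cont: "continuous_map (subtopology T H) (discrete_topology (carrier B)) \<phi>"
  obtains N where "N \<lhd> G" "openin T N" "\<And>h. h \<in> N \<inter> H \<Longrightarrow> \<phi> h = \<phi> \<one>"
proof -
  interpret topgroup G T using assms(1) by (rule profinite_group_topgroup)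
  interpret H: subgroup H G by (rule assms(2))
  have "{h \<in> H. \<phi> h = \<phi> \<one>} = {x \<in> topspace (subtopology T H). \<phi> x \<in> {\<phi> \<one>}}"
    using H.subset by auto
  also have "openin (subtopology T H) \<dots>"
    by (rule openin_continuous_map_preimage[OF cont]) (simp add: hom_in_carrier[OF hom])
  finally obtain A where A: "openin T A" "{h \<in> H. \<phi> h = \<phi> \<one>} = A \<inter> H"
    unfolding openin_subtopology by blast
  have "\<one> \<in> A \<inter> H" unfolding A(2) [symmetric] by simp
  then obtain N where N: "N \<lhd> G" "openin T N" "N \<subseteq> A"
    using profinite_open_normal_subgroup_inside_nhd[OF assms(1) A(1)] by blast
  have "\<phi> h = \<phi> \<one>" if "h \<in> N \<inter> H" for h
  proof -
    have "h \<in> A \<inter> H" using that N(3) by blast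
    then show ?thesis unfolding A(2) [symmetric] by simp
  qed
  with N(1,2) show thesis by (rule that)
qed

lemma profinite_extend_continuous_hom_to_open_subgroup:
  fixes G (structure)
  assumes "profinite_group G T" "subgroup H G"
    and hom: "\<phi> \<in> hom (G\<lparr>carrier := H\<rparr>) B"
    and cont: "continuous_map (subtopology T H) (discrete_topology (carrier B)) \<phi>"
  obtains U \<phi>' where "subgroup U G" "openin T U" "H \<subseteq> U"
    "\<phi>' \<in> hom (G\<lparr>carrier := U\<rparr>) B"
    "continuous_map (subtopology T U) (discrete_topology (carrier B)) \<phi>'"
    "\<And>h. h \<in> H \<Longrightarrow> \<phi>' h = \<phi> h"
proof -
  interpret topgroup G T using assms(1) by (rule profinite_group_topgroup)
  obtain N where N: "N \<lhd> G" "openin T N" and trivial_on_N: "\<And>h. h \<in> N \<inter> H \<Longrightarrow> \<phi> h = \<phi> \<one>"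
    by (rule profinite_open_normal_subgroup_inside_kernel[OF assms]) (rule that)
  interpret N: normal N G by (rule N(1))
  interpret H: subgroup H G by (rule assms(2))
  from trivial_on_N obtain \<phi>' where \<phi>': "\<phi>' \<in> hom (G\<lparr>carrier := N <#> H\<rparr>) B"
    and \<phi>'_eq: "\<And>n h. n \<in> N \<Longrightarrow> h \<in> H \<Longrightarrow> \<phi>' (n \<otimes> h) = \<phi> h"
    using hom_extend_to_normal_product[OF N(1) assms(2) hom] by blast
  have U: "subgroup (N <#> H) G" using N(1) assms(2) by (rule mult_norm_subgroup)
  have "N \<subseteq> N <#> H"
  proof
    fix n assume "n \<in> N"
    then have "n \<otimes> \<one> \<in> N <#> H" by (intro set_mult_memI) simp_all
    with \<open>n \<in> N\<close> show "n \<in> N <#> H" by simp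
  qed
  have H_sub: "H \<subseteq> N <#> H"
  proof
    fix h assume "h \<in> H"
    then have "\<one> \<otimes> h \<in> N <#> H" by (intro set_mult_memI) simp_all
    with \<open>h \<in> H\<close> show "h \<in> N <#> H" by simp
  qed
  have U_open: "openin T (N <#> H)"
    by (rule openin_subgroupI[OF U N(2) N.one_closed \<open>N \<subseteq> N <#> H\<close>])
  have \<phi>'_cont: "continuous_map (subtopology T (N <#> H)) (discrete_topology (carrier B)) \<phi>'"
  proof (rule continuous_map_discrete_if_r_coset_invariant[OF N.subgroup_axioms N(2) U \<open>N \<subseteq> N <#> H\<close>])
    show "\<phi>' \<in> (N <#> H) \<rightarrow> carrier B"
      using hom_in_carrier[OF \<phi>'] by simp
    fix n x assume "n \<in> N" "x \<in> N <#> H"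
    then obtain m h where x: "m \<in> N" "h \<in> H" "x = m \<otimes> h"
      by (elim set_mult_memE)
    have "\<phi>' (n \<otimes> x) = \<phi>' ((n \<otimes> m) \<otimes> h)"
      using x \<open>n \<in> N\<close> by (simp add: m_assoc)
    also have "\<dots> = \<phi>' x"
      using x \<open>n \<in> N\<close> by (simp only: \<phi>'_eq N.m_closed)
    finally show "\<phi>' (n \<otimes> x) = \<phi>' x" .
  qed
  have "\<phi>' h = \<phi> h" if "h \<in> H" for h
  proof -
    have "\<phi>' h = \<phi>' (\<one> \<otimes> h)" using that by simp
    also have "\<dots> = \<phi> h" using that by (simp only: \<phi>'_eq N.one_closed)
    finally show ?thesis .
  qed
  then show thesis by (rule that[OF U U_open H_sub \<phi>' \<phi>'_cont])
qed

lemma massey_vanishing_subgroup_if_open_subgroups: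
  fixes G (structure)
  assumes "profinite_group G T" "subgroup H G"
    and open_subgroups: "\<And>U. subgroup U G \<Longrightarrow> openin T U \<Longrightarrow>
      massey_vanishing p n (G\<lparr>carrier := U\<rparr>) (subtopology T U)"
  shows "massey_vanishing p n (G\<lparr>carrier := H\<rparr>) (subtopology T H)"
  unfolding massey_vanishing_def
proof (intro allI impI, elim conjE)
  fix \<phi> assume \<phi>: "\<phi> \<in> hom (G\<lparr>carrier := H\<rparr>) (unitri_bar p n)"
    "continuous_map (subtopology T H) (discrete_topology (carrier (unitri_bar p n))) \<phi>"
  obtain U \<phi>' where U: "subgroup U G" "openin T U" "H \<subseteq> U"
    and \<phi>': "\<phi>' \<in> hom (G\<lparr>carrier := U\<rparr>) (unitri_bar p n)"
      "continuous_map (subtopology T U) (discrete_topology (carrier (unitri_bar p n))) \<phi>'"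
    and extends: "\<And>h. h \<in> H \<Longrightarrow> \<phi>' h = \<phi> h"
    by (rule profinite_extend_continuous_hom_to_open_subgroup[OF assms(1,2) \<phi>]) (rule that)
  have "massey_vanishing p n (G\<lparr>carrier := U\<rparr>) (subtopology T U)"
    by (rule open_subgroups[OF U(1,2)])
  from this[unfolded massey_vanishing_def, rule_format, OF conjI[OF \<phi>']]
  obtain \<psi> where \<psi>: "\<psi> \<in> hom (G\<lparr>carrier := U\<rparr>) (unitri_group p n)"
      "continuous_map (subtopology T U) (discrete_topology (carrier (unitri_group p n))) \<psi>"
    and lifts: "\<forall>h\<in>carrier (G\<lparr>carrier := U\<rparr>). \<forall>M\<in>\<phi>' h. \<forall>i\<in>{1..n}. M i (Suc i) = \<psi> h i (Suc i)"
    by (elim exE conjE)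
  have "\<psi> \<in> hom (G\<lparr>carrier := H\<rparr>) (unitri_group p n)"
    using \<psi>(1) U(3) by (auto simp: hom_def)
  moreover have "continuous_map (subtopology T H) (discrete_topology (carrier (unitri_group p n))) \<psi>"
    using continuous_map_from_subtopology_mono[OF \<psi>(2) U(3)] .
  moreover have "\<forall>h\<in>carrier (G\<lparr>carrier := H\<rparr>). \<forall>M\<in>\<phi> h. \<forall>i\<in>{1..n}. M i (Suc i) = \<psi> h i (Suc i)"
  proof (intro ballI)
    fix h M i assume h: "h \<in> carrier (G\<lparr>carrier := H\<rparr>)" "M \<in> \<phi> h" "i \<in> {1..n}"
    then have "h \<in> carrier (G\<lparr>carrier := U\<rparr>)" "M \<in> \<phi>' h"
      using U(3) extends by auto
    with lifts h(3) show "M i (Suc i) = \<psi> h i (Suc i)" by blast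
  qed
  ultimately show "\<exists>\<psi>. \<psi> \<in> hom (G\<lparr>carrier := H\<rparr>) (unitri_group p n) \<and>
    continuous_map (subtopology T H) (discrete_topology (carrier (unitri_group p n))) \<psi> \<and>
    (\<forall>h\<in>carrier (G\<lparr>carrier := H\<rparr>). \<forall>M\<in>\<phi> h. \<forall>i\<in>{1..n}. M i (Suc i) = \<psi> h i (Suc i))"
    by blast
qed

theorem mainTheorem9:
  fixes \<Gamma> :: "'a monoid" and T :: "'a topology" and p n :: nat
  assumes "Factorial_Ring.prime p" and "n \<ge> 2"
    and "profinite_group \<Gamma> T"
    and "\<forall>U. subgroup U \<Gamma> \<and> openin T U \<longrightarrow>
           massey_vanishing p n (\<Gamma>\<lparr>carrier := U\<rparr>) (subtopology T U)"
  shows "\<forall>H. subgroup H \<Gamma> \<and> closedin T H \<longrightarrow>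
           massey_vanishing p n (\<Gamma>\<lparr>carrier := H\<rparr>) (subtopology T H)"
proof (intro allI impI)
  fix H assume "subgroup H \<Gamma> \<and> closedin T H"
  then have "subgroup H \<Gamma>" ..
  then show "massey_vanishing p n (\<Gamma>\<lparr>carrier := H\<rparr>) (subtopology T H)"
    by (rule massey_vanishing_subgroup_if_open_subgroups[OF assms(3)]) (simp add: assms(4))
qed

end
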